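(* Let $s\ge2$ be an integer. For every $C_1>0$ there exists $C_2>0$, and for every $C_2'>0$ there exists $C_1'>0$ (all depending only on $s$ and the given constant), such that for every integer $N\ge1$, every $\varepsilon>0$ and every $f\colon\mathbb{N}_0\to\mathbb{U}$: (i) if $\|f\|_{U^s[N]}\ge1-C_1\varepsilon$ then $\operatorname{Re} E_N(f)\ge 1-C_2\varepsilon$; (ii) if $\operatorname{Re}E_N(f)\ge1-C_2'\varepsilon$ then $\|f\|_{U^s[N]}\ge 1-C_1'\varepsilon$, where $$E_N(f)=\frac{1}{|D_N|}\sum_{\vec e\in D_N}\prod_{\omega\in\{0,1\}^s}\mathcal{C}^{|\omega|}f(e_0+\omega_1e_1+\dots+\omega_se_s),\qquad D_N=\Big\{\vec e=(e_0,\dots,e_s)\in[N]^{s+1}:\sum_{i=0}^se_i<N\Big\}.$$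
   Context: $\mathbb{U}=\{z\in\mathbb{C}:|z|=1\}$, $[N]=\{0,\dots,N-1\}$, $\mathcal{C}$ is complex conjugation, $|\omega|=\sum_i\omega_i$. Let $\Pi(N)$ be the set of $\vec n=(n_0,\dots,n_s)\in\mathbb{Z}^{s+1}$ with $n_0+\omega_1n_1+\dots+\omega_sn_s\in[N]$ for all $\omega\in\{0,1\}^s$; the Gowers norm is $\|f\|_{U^s[N]}\ge0$ with $\|f\|_{U^s[N]}^{2^s}=\frac{1}{|\Pi(N)|}\sum_{\vec n\in\Pi(N)}\prod_{\omega}\mathcal{C}^{|\omega|}f(n_0+\omega_1n_1+\dots+\omega_sn_s)$. *)

theory Defs
  imports "HOL-Analysis.Analysis" "HOL-Library.FuncSet"
begin

text \<open>Cube vertices \<omega> \<in> {0,1}^s are encoded as subsets S of {1..s} (S = {i. \<omega>_i = 1}),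
  so |\<omega>| = card S and n_0 + \<omega>_1 n_1 + ... + \<omega>_s n_s = n 0 + (\<Sum>i\<in>S. n i).\<close>

definition cube_pt :: "(nat \<Rightarrow> int) \<Rightarrow> nat set \<Rightarrow> int" where
  "cube_pt n S = n 0 + (\<Sum>i\<in>S. n i)"

definition conj_pow :: "nat \<Rightarrow> complex \<Rightarrow> complex" where
  "conj_pow k z = (if even k then z else cnj z)"

definition cube_prod :: "nat \<Rightarrow> (nat \<Rightarrow> complex) \<Rightarrow> (nat \<Rightarrow> int) \<Rightarrow> complex" where
  "cube_prod s f n = (\<Prod>S\<in>Pow {1..s}. conj_pow (card S) (f (nat (cube_pt n S))))"

definition Pi_par :: "nat \<Rightarrow> nat \<Rightarrow> (nat \<Rightarrow> int) set" where
  "Pi_par s N = {n \<in> {0..s} \<rightarrow>\<^sub>E (UNIV :: int set).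
                  \<forall>S \<subseteq> {1..s}. cube_pt n S \<in> {0..<int N}}"

definition gowers_norm :: "nat \<Rightarrow> nat \<Rightarrow> (nat \<Rightarrow> complex) \<Rightarrow> real" where
  "gowers_norm s N f =
     root (2 ^ s) (Re ((\<Sum>n\<in>Pi_par s N. cube_prod s f n) / of_nat (card (Pi_par s N))))"

definition D_set :: "nat \<Rightarrow> nat \<Rightarrow> (nat \<Rightarrow> int) set" where
  "D_set s N = {e \<in> {0..s} \<rightarrow>\<^sub>E {0..<int N}. (\<Sum>i\<in>{0..s}. e i) < int N}"

definition E_avg :: "nat \<Rightarrow> nat \<Rightarrow> (nat \<Rightarrow> complex) \<Rightarrow> complex" where
  "E_avg s N f = (\<Sum>e\<in>D_set s N. cube_prod s f e) / of_nat (card (D_set s N))"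

end

theory Submission
  imports Defs
begin

text \<open>Reflecting a parallelepiped in a set \<open>T\<close> of its directions permutes its vertices by
  \<open>S \<mapsto> S \<triangle> T\<close>, hence conjugates the cube product when \<open>|T|\<close> is odd and keeps its real
  part. Every parallelepiped in \<open>\<Pi>(N)\<close> is such a reflection of one in \<open>D\<^sub>N \<subseteq> \<Pi>(N)\<close>, so the
  nonnegative defects \<open>1 - Re (cube product)\<close> summed over \<open>\<Pi>(N)\<close> are at most \<open>2\<^sup>s\<close> times
  their sum over \<open>D\<^sub>N\<close>, and \<open>|D\<^sub>N| \<le> |\<Pi>(N)| \<le> 2\<^sup>s |D\<^sub>N|\<close>: the average defects over \<open>\<Pi>(N)\<close>
  and over \<open>D\<^sub>N\<close> agree up to a factor \<open>2\<^sup>s\<close>. Taking the \<open>2\<^sup>s\<close>-th root changes a defect only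
  by a bounded factor (Bernoulli's inequality).\<close>

definition cube_reflect :: "nat set \<Rightarrow> (nat \<Rightarrow> int) \<Rightarrow> nat \<Rightarrow> int" where
  "cube_reflect T n = (\<lambda>i. if i = 0 then cube_pt n T else if i \<in> T then - n i else n i)"

definition cube_avg :: "nat \<Rightarrow> (nat \<Rightarrow> int) set \<Rightarrow> (nat \<Rightarrow> complex) \<Rightarrow> complex" where
  "cube_avg s A f = (\<Sum>n\<in>A. cube_prod s f n) / of_nat (card A)"

lemma E_avg_eq_cube_avg: "E_avg s N f = cube_avg s (D_set s N) f"
  unfolding E_avg_def cube_avg_def ..

lemma gowers_norm_eq_root_cube_avg:
  "gowers_norm s N f = root (2 ^ s) (Re (cube_avg s (Pi_par s N) f))"
  unfolding gowers_norm_def cube_avg_def ..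

lemma cube_pt_cube_reflect:
  assumes "finite S" "finite T" "0 \<notin> S" "0 \<notin> T"
  shows "cube_pt (cube_reflect T n) S = cube_pt n (sym_diff S T)"
proof -
  have "sum (cube_reflect T n) S = sum (\<lambda>i. if i \<in> T then - n i else n i) S"
    using assms unfolding cube_reflect_def by (intro sum.cong) auto
  also have "\<dots> = sum n (S - T) - sum n (S \<inter> T)"
    using assms by (simp add: sum.If_cases sum_negf Int_commute Diff_eq)
  finally have "sum (cube_reflect T n) S = sum n (S - T) - sum n (S \<inter> T)" .
  moreover have "sum n T = sum n (S \<inter> T) + sum n (T - S)"
    using assms by (metis Int_commute sum.Int_Diff)
  moreover have "sum n (sym_diff S T) = sum n (S - T) + sum n (T - S)"
    using assms by (intro sum.union_disjoint) auto
  ultimately show ?thesis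
    by (simp add: cube_pt_def cube_reflect_def)
qed

lemma cube_reflect_involution:
  assumes "finite T" "0 \<notin> T"
  shows "cube_reflect T (cube_reflect T n) = n"
proof -
  have "cube_pt (cube_reflect T n) T = n 0"
    using assms by (simp add: cube_pt_cube_reflect) (simp add: cube_pt_def)
  then show ?thesis
    by (auto simp: cube_reflect_def)
qed

lemma even_card_sym_diff:
  assumes "finite S" "finite T"
  shows "even (card (sym_diff S T)) \<longleftrightarrow> even (card S + card T)"
proof -
  have "card (sym_diff S T) = card (S - T) + card (T - S)"
    using assms by (intro card_Un_disjoint) auto
  moreover have "card S = card (S - T) + card (S \<inter> T)" "card T = card (T - S) + card (S \<inter> T)"
    using assms by (metis add.commute card_Int_Diff Int_commute)+
  ultimately have "card S + card T = card (sym_diff S T) + 2 * card (S \<inter> T)"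
    by simp
  then show ?thesis
    by (metis even_add even_mult_iff even_numeral)
qed

lemma conj_pow_card_sym_diff:
  assumes "finite S" "finite T"
  shows "conj_pow (card (sym_diff S T)) z = conj_pow (card T) (conj_pow (card S) z)"
  using even_card_sym_diff[OF assms] by (simp add: conj_pow_def)

lemma Re_conj_pow [simp]: "Re (conj_pow k z) = Re z"
  by (simp add: conj_pow_def)

lemma conj_pow_prod: "conj_pow k (\<Prod>x\<in>A. g x) = (\<Prod>x\<in>A. conj_pow k (g x))"
  by (simp add: conj_pow_def)

lemma cube_prod_cube_reflect:
  assumes T: "T \<subseteq> {1..s}"
  shows "cube_prod s f (cube_reflect T n) = conj_pow (card T) (cube_prod s f n)"
proof -
  have fin: "finite T" "\<And>S. S \<in> Pow {1..s} \<Longrightarrow> finite S"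
    using T finite_subset by auto
  have bij: "bij_betw (\<lambda>S. sym_diff S T) (Pow {1..s}) (Pow {1..s})"
    by (rule bij_betwI[where g = "\<lambda>S. sym_diff S T"]) (use T in auto)
  have sym_diff_twice: "\<And>S. sym_diff (sym_diff S T) T = S"
    by blast
  have "cube_prod s f (cube_reflect T n) =
      (\<Prod>S\<in>Pow {1..s}. conj_pow (card S) (f (nat (cube_pt n (sym_diff S T)))))"
    unfolding cube_prod_def using T fin
    by (intro prod.cong refl) (subst cube_pt_cube_reflect, auto)
  also have "\<dots> = (\<Prod>S\<in>Pow {1..s}. conj_pow (card (sym_diff S T)) (f (nat (cube_pt n S))))"
    by (subst prod.reindex_bij_betw[OF bij, symmetric]) (simp only: sym_diff_twice)
  also have "\<dots> = (\<Prod>S\<in>Pow {1..s}. conj_pow (card T) (conj_pow (card S) (f (nat (cube_pt n S)))))"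
    using fin by (intro prod.cong refl) (simp add: conj_pow_card_sym_diff)
  finally show ?thesis
    by (simp add: cube_prod_def conj_pow_prod)
qed

lemma sum_atLeast0_atMost_eq_cube_pt: "sum n {0..s} = cube_pt n {1..s}"
  by (simp add: cube_pt_def sum.atLeast_Suc_atMost)

lemma D_set_subset_Pi_par: "D_set s N \<subseteq> Pi_par s N"
proof
  fix e assume "e \<in> D_set s N"
  then have e: "e \<in> {0..s} \<rightarrow>\<^sub>E {0..<int N}" and sum_e: "sum e {0..s} < int N"
    unfolding D_set_def by auto
  have "cube_pt e S \<in> {0..<int N}" if S: "S \<subseteq> {1..s}" for S
  proof -
    have "sum e S \<le> sum e {1..s}"
      using S e by (intro sum_mono2) force+
    moreover have "0 \<le> sum e S" "0 \<le> e 0"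
      using S e by (force intro!: sum_nonneg)+
    ultimately show ?thesis
      using sum_e by (simp add: sum_atLeast0_atMost_eq_cube_pt cube_pt_def)
  qed
  then show "e \<in> Pi_par s N"
    using e unfolding Pi_par_def by auto
qed

lemma Pi_par_subset_cube_reflect_image:
  "Pi_par s N \<subseteq> (\<lambda>(T, e). cube_reflect T e) ` (Pow {1..s} \<times> D_set s N)"
proof
  fix n assume "n \<in> Pi_par s N"
  then have n: "n \<in> {0..s} \<rightarrow>\<^sub>E UNIV" and vertices: "\<And>S. S \<subseteq> {1..s} \<Longrightarrow> cube_pt n S \<in> {0..<int N}"
    unfolding Pi_par_def by auto
  define T where "T = {i \<in> {1..s}. n i < 0}"
  define e where "e = cube_reflect T n"
  have T: "T \<subseteq> {1..s}" "0 \<notin> T" "finite T"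
    unfolding T_def by auto
  have "n = cube_reflect T e"
    using T by (simp add: e_def cube_reflect_involution)
  have e_steps: "e i = \<bar>n i\<bar>" if "i \<in> {1..s}" for i
    using that by (auto simp: e_def cube_reflect_def T_def)
  have "sum e {0..s} = cube_pt n (sym_diff {1..s} T)"
    using T by (simp add: sum_atLeast0_atMost_eq_cube_pt e_def cube_pt_cube_reflect)
  also have "sym_diff {1..s} T = {1..s} - T"
    using T by auto
  finally have sum_e: "sum e {0..s} \<in> {0..<int N}"
    using vertices by simp
  have e_nonneg: "0 \<le> e i" if "i \<in> {0..s}" for i
    using that e_steps vertices[OF T(1)] by (cases "i = 0") (auto simp: e_def cube_reflect_def)
  have "e i < int N" if "i \<in> {0..s}" for i
    using that e_nonneg sum_e member_le_sum[of i "{0..s}" e] by auto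
  moreover have "e i = undefined" if "i \<notin> {0..s}" for i
    using that n T_def by (auto simp: e_def cube_reflect_def)
  ultimately have "e \<in> D_set s N"
    using e_nonneg sum_e by (auto simp: D_set_def)
  with T \<open>n = cube_reflect T e\<close> show "n \<in> (\<lambda>(T, e). cube_reflect T e) ` (Pow {1..s} \<times> D_set s N)"
    by force
qed

lemma finite_D_set: "finite (D_set s N)"
  unfolding D_set_def by (rule finite_subset[of _ "{0..s} \<rightarrow>\<^sub>E {0..<int N}"]) (auto intro: finite_PiE)

lemma D_set_nonempty:
  assumes "N \<ge> 1"
  shows "D_set s N \<noteq> {}"
proof -
  have "(\<lambda>i\<in>{0..s}. 0) \<in> D_set s N"
    using assms by (simp add: D_set_def)
  then show ?thesis
    by blast
qed

lemma finite_Pi_par: "finite (Pi_par s N)"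
  by (rule finite_subset[OF Pi_par_subset_cube_reflect_image]) (auto intro: finite_D_set)

lemma sum_Pi_par_le:
  fixes h :: "(nat \<Rightarrow> int) \<Rightarrow> real"
  assumes reflect_invariant: "\<And>T e. T \<subseteq> {1..s} \<Longrightarrow> h (cube_reflect T e) = h e"
    and nonneg: "\<And>e. 0 \<le> h e"
  shows "sum h (Pi_par s N) \<le> 2 ^ s * sum h (D_set s N)"
proof -
  let ?R = "\<lambda>(T, e). cube_reflect T e"
  have "sum h (Pi_par s N) \<le> sum h (?R ` (Pow {1..s} \<times> D_set s N))"
    using Pi_par_subset_cube_reflect_image finite_D_set nonneg by (intro sum_mono2) auto
  also have "\<dots> \<le> sum (h \<circ> ?R) (Pow {1..s} \<times> D_set s N)"
    using finite_D_set nonneg by (intro sum_image_le) auto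
  also have "\<dots> = (\<Sum>T\<in>Pow {1..s}. \<Sum>e\<in>D_set s N. h (cube_reflect T e))"
    by (simp add: sum.cartesian_product case_prod_beta)
  also have "\<dots> = 2 ^ s * sum h (D_set s N)"
    using reflect_invariant by (simp add: card_Pow)
  finally show ?thesis .
qed

lemma mean_le_of_sum_le:
  fixes g :: "'a \<Rightarrow> real" and K :: real
  assumes "finite P" "D \<subseteq> P" "D \<noteq> {}" "\<And>x. x \<in> P \<Longrightarrow> 0 \<le> g x"
    and "sum g P \<le> K * sum g D"
  shows "sum g P / card P \<le> K * (sum g D / card D)"
proof -
  have "0 < card D" "card D \<le> card P"
    using assms by (auto simp: card_gt_0_iff finite_subset card_mono)
  moreover have "0 \<le> K * sum g D"
    using assms(4,5) sum_nonneg[of P g] by fastforce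
  ultimately have "K * sum g D / card P \<le> K * sum g D / card D"
    by (intro divide_left_mono) auto
  with assms(5) \<open>card D \<le> card P\<close> \<open>0 < card D\<close> show ?thesis
    by (smt (verit) divide_right_mono of_nat_0_le_iff times_divide_eq_right)
qed

lemma mean_subset_le:
  fixes g :: "'a \<Rightarrow> real" and K :: real
  assumes "finite P" "D \<subseteq> P" "D \<noteq> {}" "\<And>x. x \<in> P \<Longrightarrow> 0 \<le> g x"
    and "card P \<le> K * card D"
  shows "sum g D / card D \<le> K * (sum g P / card P)"
proof -
  have "0 < card D" "0 < card P"
    using assms by (auto simp: card_gt_0_iff finite_subset)
  have "sum g D * card P \<le> sum g P * card P"
    using assms by (intro mult_right_mono sum_mono2) auto
  also have "\<dots> \<le> sum g P * (K * card D)"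
    using assms by (intro mult_left_mono) (auto intro: sum_nonneg)
  finally show ?thesis
    using \<open>0 < card D\<close> \<open>0 < card P\<close> by (simp add: field_simps)
qed

lemma norm_cube_prod:
  assumes "\<forall>x. norm (f x) = 1"
  shows "norm (cube_prod s f n) = 1"
  unfolding cube_prod_def prod_norm[symmetric] using assms
  by (intro prod.neutral ballI) (simp add: conj_pow_def)

lemma abs_Re_cube_avg_le:
  assumes "\<forall>x. norm (f x) = 1"
  shows "\<bar>Re (cube_avg s A f)\<bar> \<le> 1"
proof -
  have "norm (\<Sum>n\<in>A. cube_prod s f n) \<le> card A"
    using norm_sum[of "cube_prod s f" A] assms by (simp add: norm_cube_prod)
  then have "norm (cube_avg s A f) \<le> 1"
    by (cases "card A = 0") (simp_all add: cube_avg_def norm_divide)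
  then show ?thesis
    using abs_Re_le_cmod order_trans by blast
qed

lemma one_minus_Re_cube_avg:
  assumes "finite A" "A \<noteq> {}"
  shows "1 - Re (cube_avg s A f) = (\<Sum>n\<in>A. 1 - Re (cube_prod s f n)) / card A"
  using assms by (simp add: cube_avg_def Re_sum sum_subtractf diff_divide_distrib)

lemma cube_avg_defects_comparable:
  assumes "N \<ge> 1" "\<forall>x. norm (f x) = 1"
  shows "1 - Re (cube_avg s (Pi_par s N) f) \<le> 2 ^ s * (1 - Re (E_avg s N f))"
    and "1 - Re (E_avg s N f) \<le> 2 ^ s * (1 - Re (cube_avg s (Pi_par s N) f))"
proof -
  define defect where "defect n = 1 - Re (cube_prod s f n)" for n
  have defect_nonneg: "0 \<le> defect n" for n
    using abs_Re_le_cmod[of "cube_prod s f n"] norm_cube_prod[OF assms(2)] by (simp add: defect_def)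
  have "defect (cube_reflect T n) = defect n" if "T \<subseteq> {1..s}" for T n
    using that by (simp add: defect_def cube_prod_cube_reflect)
  then have sums: "sum defect (Pi_par s N) \<le> 2 ^ s * sum defect (D_set s N)"
    using defect_nonneg by (intro sum_Pi_par_le)
  have "sum (\<lambda>_. 1::real) (Pi_par s N) \<le> 2 ^ s * sum (\<lambda>_. 1) (D_set s N)"
    by (intro sum_Pi_par_le) auto
  then have cards: "card (Pi_par s N) \<le> 2 ^ s * real (card (D_set s N))"
    by simp
  have sets: "finite (Pi_par s N)" "D_set s N \<subseteq> Pi_par s N" "D_set s N \<noteq> {}"
    "finite (D_set s N)" "Pi_par s N \<noteq> {}"
    using assms(1) D_set_subset_Pi_par[of s N] D_set_nonempty[of N s] finite_Pi_par finite_D_set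
    by auto
  show "1 - Re (cube_avg s (Pi_par s N) f) \<le> 2 ^ s * (1 - Re (E_avg s N f))"
    using mean_le_of_sum_le[OF sets(1-3) _ sums] defect_nonneg sets
    by (simp add: E_avg_eq_cube_avg one_minus_Re_cube_avg defect_def)
  show "1 - Re (E_avg s N f) \<le> 2 ^ s * (1 - Re (cube_avg s (Pi_par s N) f))"
    using mean_subset_le[OF sets(1-3) _ cards] defect_nonneg sets
    by (simp add: E_avg_eq_cube_avg one_minus_Re_cube_avg defect_def)
qed

lemma one_minus_le_root_defect:
  fixes p :: real
  assumes "0 < k" "-1 \<le> p" "p \<le> 1"
  shows "1 - p \<le> 2 * k * (1 - root k p)"
proof (cases "0 \<le> p")
  case True
  have "1 + k * (root k p - 1) \<le> (1 + (root k p - 1)) ^ k"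
    using True by (intro Bernoulli_inequality) (simp add: real_root_ge_zero)
  also have "\<dots> = p"
    using assms True by simp
  finally have "1 - p \<le> k * (1 - root k p)"
    by (simp add: algebra_simps)
  moreover have "0 \<le> k * (1 - root k p)"
    using assms True by simp
  ultimately show ?thesis
    by simp
next
  case False
  then have "1 \<le> 1 - root k p" "1 \<le> real k"
    using assms by auto
  then have "1 * 1 \<le> k * (1 - root k p)"
    by (intro mult_mono) auto
  then show ?thesis
    using assms by simp
qed

lemma root_defect_le:
  fixes p :: real
  assumes "0 < k" "-1 \<le> p" "p \<le> 1"
  shows "1 - root k p \<le> 2 * (1 - p)"
proof (cases "0 \<le> p")
  case True
  then have "p \<le> root k p"
    using real_root_increasing[of 1 k p] assms by simp
  with assms show ?thesis
    by simp
next
  case False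
  have "-1 \<le> root k p"
    using real_root_le_mono[OF assms(1,2)] assms(1) by (simp add: real_root_minus)
  with False show ?thesis
    by simp
qed

lemma E_avg_defect_le_gowers_defect:
  assumes "N \<ge> 1" "\<forall>x. norm (f x) = 1"
  shows "1 - Re (E_avg s N f) \<le> 2 * 4 ^ s * (1 - gowers_norm s N f)"
proof -
  let ?p = "Re (cube_avg s (Pi_par s N) f)"
  have "\<bar>?p\<bar> \<le> 1"
    using abs_Re_cube_avg_le assms(2) .
  then have "1 - ?p \<le> 2 * 2 ^ s * (1 - gowers_norm s N f)"
    using one_minus_le_root_defect[of "2 ^ s" ?p] by (simp add: gowers_norm_eq_root_cube_avg)
  then have "2 ^ s * (1 - ?p) \<le> 2 ^ s * (2 * 2 ^ s * (1 - gowers_norm s N f))"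
    by simp
  also have "\<dots> = 2 * 4 ^ s * (1 - gowers_norm s N f)"
    by (simp add: power_mult_distrib[symmetric])
  finally show ?thesis
    using cube_avg_defects_comparable(2)[OF assms, of s] by linarith
qed

lemma gowers_defect_le_E_avg_defect:
  assumes "N \<ge> 1" "\<forall>x. norm (f x) = 1"
  shows "1 - gowers_norm s N f \<le> 2 * 2 ^ s * (1 - Re (E_avg s N f))"
proof -
  let ?p = "Re (cube_avg s (Pi_par s N) f)"
  have "\<bar>?p\<bar> \<le> 1"
    using abs_Re_cube_avg_le assms(2) .
  then have "1 - gowers_norm s N f \<le> 2 * (1 - ?p)"
    using root_defect_le[of "2 ^ s" ?p] by (simp add: gowers_norm_eq_root_cube_avg)
  also have "\<dots> \<le> 2 * 2 ^ s * (1 - Re (E_avg s N f))"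
    using cube_avg_defects_comparable(1)[OF assms, of s] by (simp add: mult.assoc)
  finally show ?thesis .
qed

theorem lemma3p2:
  fixes s :: nat
  assumes "s \<ge> 2"
  shows "(\<forall>C1>0. \<exists>C2>(0::real). \<forall>N::nat. \<forall>\<epsilon>>(0::real). \<forall>f :: nat \<Rightarrow> complex.
            N \<ge> 1 \<longrightarrow> (\<forall>x. norm (f x) = 1) \<longrightarrow>
            gowers_norm s N f \<ge> 1 - C1 * \<epsilon> \<longrightarrow> Re (E_avg s N f) \<ge> 1 - C2 * \<epsilon>)
       \<and> (\<forall>C2'>0. \<exists>C1'>(0::real). \<forall>N::nat. \<forall>\<epsilon>>(0::real). \<forall>f :: nat \<Rightarrow> complex.
            N \<ge> 1 \<longrightarrow> (\<forall>x. norm (f x) = 1) \<longrightarrow>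
            Re (E_avg s N f) \<ge> 1 - C2' * \<epsilon> \<longrightarrow> gowers_norm s N f \<ge> 1 - C1' * \<epsilon>)"
proof (intro conjI allI impI)
  fix C1 :: real
  assume "C1 > 0"
  show "\<exists>C2>0. \<forall>N::nat. \<forall>\<epsilon>>0. \<forall>f. N \<ge> 1 \<longrightarrow> (\<forall>x. norm (f x) = 1) \<longrightarrow>
          gowers_norm s N f \<ge> 1 - C1 * \<epsilon> \<longrightarrow> Re (E_avg s N f) \<ge> 1 - C2 * \<epsilon>"
  proof (intro exI[of _ "2 * 4 ^ s * C1"] conjI allI impI)
    fix N \<epsilon> and f :: "nat \<Rightarrow> complex"
    assume "N \<ge> 1" "\<forall>x. norm (f x) = 1" "gowers_norm s N f \<ge> 1 - C1 * \<epsilon>"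
    then have "1 - Re (E_avg s N f) \<le> 2 * 4 ^ s * (1 - gowers_norm s N f)"
      by (intro E_avg_defect_le_gowers_defect)
    also have "\<dots> \<le> 2 * 4 ^ s * (C1 * \<epsilon>)"
      using \<open>gowers_norm s N f \<ge> 1 - C1 * \<epsilon>\<close> by (intro mult_left_mono) auto
    finally show "Re (E_avg s N f) \<ge> 1 - 2 * 4 ^ s * C1 * \<epsilon>"
      by (simp add: mult.assoc)
  qed (use \<open>C1 > 0\<close> in simp)
next
  fix C2 :: real
  assume "C2 > 0"
  show "\<exists>C1>0. \<forall>N::nat. \<forall>\<epsilon>>0. \<forall>f. N \<ge> 1 \<longrightarrow> (\<forall>x. norm (f x) = 1) \<longrightarrow>
          Re (E_avg s N f) \<ge> 1 - C2 * \<epsilon> \<longrightarrow> gowers_norm s N f \<ge> 1 - C1 * \<epsilon>"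
  proof (intro exI[of _ "2 * 2 ^ s * C2"] conjI allI impI)
    fix N \<epsilon> and f :: "nat \<Rightarrow> complex"
    assume "N \<ge> 1" "\<forall>x. norm (f x) = 1" "Re (E_avg s N f) \<ge> 1 - C2 * \<epsilon>"
    then have "1 - gowers_norm s N f \<le> 2 * 2 ^ s * (1 - Re (E_avg s N f))"
      by (intro gowers_defect_le_E_avg_defect)
    also have "\<dots> \<le> 2 * 2 ^ s * (C2 * \<epsilon>)"
      using \<open>Re (E_avg s N f) \<ge> 1 - C2 * \<epsilon>\<close> by (intro mult_left_mono) auto
    finally show "gowers_norm s N f \<ge> 1 - 2 * 2 ^ s * C2 * \<epsilon>"
      by (simp add: mult.assoc)
  qed (use \<open>C2 > 0\<close> in simp)
qed

end
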